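(* Let $M$ be a system execution satisfying the Lazy Set axioms A0, A1, A2, and let $\Rightarrow$ be the relation defined in the context. Then the relation $<'\;=\;(<\cup\Rightarrow)$ (i.e. $a<'b$ iff $a<b$ or $a\Rightarrow b$) contains no cycles: there is no sequence of events $X_0<'X_1<'\cdots<'X_n$ with $n\ge1$ and $X_0=X_n$.
   Context: A system execution $M$ consists of: a set of events, partitioned into low-level events (actions) and high-level events; unary predicates $\mathrm{Add},\mathrm{Rem},\mathrm{Cnt}$ on events; a partial order $<$ on events in which every event has finitely many predecessors (and Lamport's finiteness property: for every event $x$ there is a finite set $E$ with $x<y$ for all events $y\notin E$); functions $\mathrm{Begin},\mathrm{End}$ from events to actions with $\mathrm{Begin}(e)=\mathrm{End}(e)=e$ for actions $e$; functions $\chi$ (events $\to\{0,1,f\}$), $\mathrm{val}$ (events $\to\mathbb N$), $\gamma$ (events $\to$ events). For events $X,Y$, $X<Y$ iff $\mathrm{End}(X)<\mathrm{Begin}(Y)$. Notation: $\mathrm{Add}^p(a)$ abbreviates $\mathrm{Add}(a)\wedge\chi(a)=p$, similarly $\mathrm{Rem}^p,\mathrm{Cnt}^p$; $\mathrm{Op}^p(a)$ abbreviates $(\mathrm{Add}(a)\vee\mathrm{Rem}(a)\vee\mathrm{Cnt}(a))\wedge\chi(a)=p$ for $p\in\{0,1\}$. A0: $\mathrm{Add},\mathrm{Rem},\mathrm{Cnt}$ pairwise disjoint; $\mathrm{Add},\mathrm{Rem}$ events are actions, $\mathrm{Cnt}$ events are high-level; $\mathrm{Begin}(X),\mathrm{End}(X)$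 are actions; for $\mathrm{Cnt}$ events $E$, $\mathrm{Begin}(E)<\mathrm{End}(E)$; $<$ restricted to actions is linear. A1: for every $A$ with $\mathrm{Op}^1(A)$: $\mathrm{Add}^0(\gamma(A))$, $\mathrm{val}(\gamma(A))=\mathrm{val}(A)$, $\gamma(A)<\mathrm{End}(A)$, and no $R$ has $\mathrm{Rem}^1(R)$, $\gamma(R)=\gamma(A)$, $\gamma(A)<R<A$. A2: if $\mathrm{Op}^0(B)$, $\mathrm{Add}^0(A)$, $A<B$, $\mathrm{val}(A)=\mathrm{val}(B)$, then some $R$ has $\mathrm{Rem}^1(R)$, $A=\gamma(R)$, $R<\mathrm{End}(B)$. The relation $\Rightarrow$ on events holds exactly in the following cases: (1) for every $\mathrm{Cnt}^1$ event $C$: $\gamma(C)\Rightarrow C$, and $C\Rightarrow R$ for every $R$ with $\mathrm{Rem}^1(R)$ and $\gamma(R)=\gamma(C)$; (2) $R\Rightarrow C$ whenever $\mathrm{Cnt}^0(C)$, $\mathrm{Rem}^1(R)$, $\mathrm{val}(R)=\mathrm{val}(C)$, not $C<R$, and $\gamma(R)<C$; (3) $C\Rightarrow A$ whenever $\mathrm{Cnt}^0(C)$, $\mathrm{Add}^0(A)$, $\mathrm{val}(C)=\mathrm{val}(A)$ and not $A<C$. *)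

theory Defs
  imports Main
begin

datatype chival = X0 | X1 | Xf

text \<open>A (candidate) system execution. The set of events is the whole type 'e.
  act e means that e is a low-level event (action); all other events are high-level.\<close>
record 'e sysexec =
  act   :: "'e \<Rightarrow> bool"
  Add   :: "'e \<Rightarrow> bool"
  Rem   :: "'e \<Rightarrow> bool"
  Cnt   :: "'e \<Rightarrow> bool"
  prec  :: "'e \<Rightarrow> 'e \<Rightarrow> bool"
  Begin :: "'e \<Rightarrow> 'e"
  End   :: "'e \<Rightarrow> 'e"
  chi   :: "'e \<Rightarrow> chival"
  val   :: "'e \<Rightarrow> nat"
  gamma :: "'e \<Rightarrow> 'e"

definition system_execution :: "'e sysexec \<Rightarrow> bool" where
  "system_execution M \<longleftrightarrow>
     (\<forall>x. \<not> prec M x x) \<and>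
     (\<forall>x y z. prec M x y \<longrightarrow> prec M y z \<longrightarrow> prec M x z) \<and>
     (\<forall>x. finite {y. prec M y x}) \<and>
     (\<forall>x. \<exists>E. finite E \<and> (\<forall>y. y \<notin> E \<longrightarrow> prec M x y)) \<and>
     (\<forall>e. act M e \<longrightarrow> Begin M e = e \<and> End M e = e) \<and>
     (\<forall>X Y. prec M X Y \<longleftrightarrow> prec M (End M X) (Begin M Y))"

definition Add_p :: "'e sysexec \<Rightarrow> chival \<Rightarrow> 'e \<Rightarrow> bool" where
  "Add_p M p a \<longleftrightarrow> Add M a \<and> chi M a = p"
definition Rem_p :: "'e sysexec \<Rightarrow> chival \<Rightarrow> 'e \<Rightarrow> bool" where
  "Rem_p M p a \<longleftrightarrow> Rem M a \<and> chi M a = p"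
definition Cnt_p :: "'e sysexec \<Rightarrow> chival \<Rightarrow> 'e \<Rightarrow> bool" where
  "Cnt_p M p a \<longleftrightarrow> Cnt M a \<and> chi M a = p"
definition Op_p :: "'e sysexec \<Rightarrow> chival \<Rightarrow> 'e \<Rightarrow> bool" where
  "Op_p M p a \<longleftrightarrow> (Add M a \<or> Rem M a \<or> Cnt M a) \<and> chi M a = p"

definition A0 :: "'e sysexec \<Rightarrow> bool" where
  "A0 M \<longleftrightarrow>
     (\<forall>e. \<not> (Add M e \<and> Rem M e) \<and> \<not> (Add M e \<and> Cnt M e) \<and> \<not> (Rem M e \<and> Cnt M e)) \<and>
     (\<forall>e. Add M e \<longrightarrow> act M e) \<and>
     (\<forall>e. Rem M e \<longrightarrow> act M e) \<and>
     (\<forall>e. Cnt M e \<longrightarrow> \<not> act M e) \<and>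
     (\<forall>X. act M (Begin M X) \<and> act M (End M X)) \<and>
     (\<forall>E. Cnt M E \<longrightarrow> prec M (Begin M E) (End M E)) \<and>
     (\<forall>a b. act M a \<longrightarrow> act M b \<longrightarrow> a = b \<or> prec M a b \<or> prec M b a)"

definition A1 :: "'e sysexec \<Rightarrow> bool" where
  "A1 M \<longleftrightarrow>
     (\<forall>A. Op_p M X1 A \<longrightarrow>
        Add_p M X0 (gamma M A) \<and> val M (gamma M A) = val M A \<and>
        prec M (gamma M A) (End M A) \<and>
        \<not> (\<exists>R. Rem_p M X1 R \<and> gamma M R = gamma M A \<and>
                prec M (gamma M A) R \<and> prec M R A))"

definition A2 :: "'e sysexec \<Rightarrow> bool" where
  "A2 M \<longleftrightarrow>
     (\<forall>A B. Op_p M X0 B \<longrightarrow> Add_p M X0 A \<longrightarrow> prec M A B \<longrightarrow> val M A = val M B \<longrightarrow>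
        (\<exists>R. Rem_p M X1 R \<and> A = gamma M R \<and> prec M R (End M B)))"

definition arrow :: "'e sysexec \<Rightarrow> 'e \<Rightarrow> 'e \<Rightarrow> bool" where
  "arrow M a b \<longleftrightarrow>
     (Cnt_p M X1 b \<and> a = gamma M b) \<or>
     (Cnt_p M X1 a \<and> Rem_p M X1 b \<and> gamma M b = gamma M a) \<or>
     (Cnt_p M X0 b \<and> Rem_p M X1 a \<and> val M a = val M b \<and> \<not> prec M b a \<and>
        prec M (gamma M a) b) \<or>
     (Cnt_p M X0 a \<and> Add_p M X0 b \<and> val M a = val M b \<and> \<not> prec M b a)"

definition prec' :: "'e sysexec \<Rightarrow> 'e \<Rightarrow> 'e \<Rightarrow> bool" where
  "prec' M a b \<longleftrightarrow> prec M a b \<or> arrow M a b"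

end

theory Submission
  imports Defs
begin

text \<open>Every event X is mapped to a timestamp: a downset in the lexicographic order on pairs
  (e, k) of an event and a level k \<in> {0,1,2}, ordered by < first. An action e occupies the
  level-1 point of e; a Cnt event C spans from the level-0 point of its begin up to the level-2
  points of the actions it depends on through \<Rightarrow> (gamma C if chi C = 1, the removals
  R with R \<Rightarrow> C if chi C = 0). Axioms A1 and A2 make every step of < and of \<Rightarrow>
  strictly enlarge the timestamp, so <' cannot cycle.\<close>

lemma no_cycle_if_strictly_increasing:
  fixes f :: "'a \<Rightarrow> 'b::order"
  assumes increasing: "\<And>x y. r x y \<Longrightarrow> f x < f y"
  shows "\<not> (\<exists>n X. n \<ge> 1 \<and> X 0 = X n \<and> (\<forall>i<n. r (X i) (X (Suc i))))"
proof
  assume "\<exists>n X. n \<ge> 1 \<and> X 0 = X n \<and> (\<forall>i<n. r (X i) (X (Suc i)))"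
  then obtain n X where "n \<ge> 1" and closed: "X 0 = X n" and steps: "\<forall>i<n. r (X i) (X (Suc i))"
    by blast
  then obtain m where n: "n = Suc m"
    by (cases n) auto
  have "f (X 0) \<le> f (X k)" if "k \<le> m" for k
    using that
  proof (induction k)
    case (Suc k)
    then have "f (X k) < f (X (Suc k))"
      using increasing steps n by simp
    with Suc show ?case
      by simp
  qed simp
  also have "f (X m) < f (X (Suc m))"
    using increasing steps n by simp
  finally show False
    using closed n by simp
qed

definition stamp_less :: "'e sysexec \<Rightarrow> 'e \<times> nat \<Rightarrow> 'e \<times> nat \<Rightarrow> bool" where
  "stamp_less M p q \<longleftrightarrow> prec M (fst p) (fst q) \<or> (fst p = fst q \<and> snd p < snd q)"

definition stamps_below :: "'e sysexec \<Rightarrow> 'e \<times> nat \<Rightarrow> ('e \<times> nat) set" where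
  "stamps_below M p = {q. stamp_less M q p}"

definition timestamp :: "'e sysexec \<Rightarrow> 'e \<Rightarrow> ('e \<times> nat) set" where
  "timestamp M X =
     (if Cnt_p M X1 X then stamps_below M (Begin M X, 0) \<union> stamps_below M (gamma M X, 2)
      else if Cnt_p M X0 X then stamps_below M (Begin M X, 0) \<union>
        (\<Union>R\<in>{R. Rem_p M X1 R \<and> val M R = val M X \<and> \<not> prec M X R \<and> prec M (gamma M R) X}.
           stamps_below M (R, 2))
      else stamps_below M (Begin M X, 1))"

locale execution =
  fixes M :: "'e sysexec"
  assumes system_execution: "system_execution M"
    and axiom_A0: "A0 M"
begin

lemma prec_irrefl: "\<not> prec M x x"
  using system_execution by (simp add: system_execution_def)

lemma prec_trans: "prec M x y \<Longrightarrow> prec M y z \<Longrightarrow> prec M x z"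
  using system_execution unfolding system_execution_def by blast

lemma act_Begin: "act M e \<Longrightarrow> Begin M e = e"
  and act_End: "act M e \<Longrightarrow> End M e = e"
  using system_execution by (simp_all add: system_execution_def)

lemma prec_iff_End_Begin: "prec M X Y \<longleftrightarrow> prec M (End M X) (Begin M Y)"
  using system_execution unfolding system_execution_def by blast

lemma act_linear: "act M a \<Longrightarrow> act M b \<Longrightarrow> a = b \<or> prec M a b \<or> prec M b a"
  using axiom_A0 unfolding A0_def by blast

lemma act_Begin_of: "act M (Begin M X)"
  and act_End_of: "act M (End M X)"
  using axiom_A0 unfolding A0_def by blast+

lemma Add_act: "Add M e \<Longrightarrow> act M e"
  and Rem_act: "Rem M e \<Longrightarrow> act M e"
  and Cnt_not_act: "Cnt M e \<Longrightarrow> \<not> act M e"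
  using axiom_A0 unfolding A0_def by blast+

lemma Add_not_Rem: "Add M e \<Longrightarrow> \<not> Rem M e"
  using axiom_A0 unfolding A0_def by blast

lemma Begin_before_if_not_prec:
  assumes "act M a" and "\<not> prec M a X"
  shows "Begin M X = a \<or> prec M (Begin M X) a"
proof -
  have "\<not> prec M a (Begin M X)"
    using assms prec_iff_End_Begin act_End by metis
  then show ?thesis
    using act_linear[OF assms(1) act_Begin_of[of X]] by blast
qed

lemma End_after_if_not_prec:
  assumes "act M a" and "\<not> prec M X a"
  shows "a = End M X \<or> prec M a (End M X)"
proof -
  have "\<not> prec M (End M X) a"
    using assms prec_iff_End_Begin act_Begin by metis
  then show ?thesis
    using act_linear[OF assms(1) act_End_of[of X]] by blast
qed

lemma Begin_before_End: "Begin M X = End M X \<or> prec M (Begin M X) (End M X)"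
proof -
  have "\<not> prec M (End M X) (Begin M X)"
    using prec_iff_End_Begin prec_irrefl by blast
  then show ?thesis
    using act_linear[OF act_Begin_of act_End_of] by blast
qed

lemma stamp_less_trans: "stamp_less M p q \<Longrightarrow> stamp_less M q r \<Longrightarrow> stamp_less M p r"
  unfolding stamp_less_def using prec_trans by auto

lemma stamp_less_irrefl: "\<not> stamp_less M p p"
  unfolding stamp_less_def using prec_irrefl by auto

lemma stamps_below_mono: "stamp_less M p q \<Longrightarrow> stamps_below M p \<subseteq> stamps_below M q"
  unfolding stamps_below_def using stamp_less_trans by blast

lemma stamps_below_psubset: "stamp_less M p q \<Longrightarrow> stamps_below M p \<subset> stamps_below M q"
  unfolding stamps_below_def using stamp_less_trans stamp_less_irrefl by blast

lemma stamps_below_mono_le: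
  "a = b \<or> prec M a b \<Longrightarrow> k \<le> l \<Longrightarrow> stamps_below M (a, k) \<subseteq> stamps_below M (b, l)"
proof -
  assume "a = b \<or> prec M a b" and "k \<le> l"
  then have "stamp_less M (a, k) (b, l) \<or> (a, k) = (b, l)"
    by (auto simp: stamp_less_def)
  then show ?thesis
    using stamps_below_mono by blast
qed

lemma timestamp_act: "act M e \<Longrightarrow> timestamp M e = stamps_below M (e, 1)"
  using Cnt_not_act act_Begin by (auto simp: timestamp_def Cnt_p_def)

lemma Rem1_act: "Rem_p M X1 R \<Longrightarrow> act M R"
  using Rem_act by (simp add: Rem_p_def)

lemma Add0_act: "Add_p M X0 A \<Longrightarrow> act M A"
  using Add_act by (simp add: Add_p_def)

end

lemma Op_p_if_Add_p: "Add_p M p a \<Longrightarrow> Op_p M p a"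
  and Op_p_if_Rem_p: "Rem_p M p a \<Longrightarrow> Op_p M p a"
  and Op_p_if_Cnt_p: "Cnt_p M p a \<Longrightarrow> Op_p M p a"
  by (simp_all add: Add_p_def Rem_p_def Cnt_p_def Op_p_def)

locale lazy_set_execution = execution +
  assumes axiom_A1: "A1 M"
    and axiom_A2: "A2 M"
begin

lemma gamma_Add0:
  "Op_p M X1 A \<Longrightarrow> Add_p M X0 (gamma M A)"
  and val_gamma: "Op_p M X1 A \<Longrightarrow> val M (gamma M A) = val M A"
  and gamma_prec_End: "Op_p M X1 A \<Longrightarrow> prec M (gamma M A) (End M A)"
  using axiom_A1 unfolding A1_def by blast+

lemma no_Rem1_between_gamma:
  "\<lbrakk>Op_p M X1 A; Rem_p M X1 R; gamma M R = gamma M A; prec M (gamma M A) R\<rbrakk>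
     \<Longrightarrow> \<not> prec M R A"
  using axiom_A1 unfolding A1_def by blast

lemma Rem1_of_Add0_before_Op0:
  assumes "Op_p M X0 B" and "Add_p M X0 A" and "prec M A B" and "val M A = val M B"
  obtains R where "Rem_p M X1 R" and "gamma M R = A" and "prec M R (End M B)"
  using axiom_A2 assms unfolding A2_def by metis

lemma gamma_prec_Rem1: "Rem_p M X1 R \<Longrightarrow> prec M (gamma M R) R"
  using gamma_prec_End[OF Op_p_if_Rem_p] act_End[OF Rem1_act] by metis

text \<open>A successful removal R of gamma R comes before every later Add^0 of the same value:
  otherwise A2, applied to that add, yields a second removal of gamma R strictly between
  gamma R and R, which A1 forbids.\<close>
lemma Rem1_prec_Add0:
  assumes R: "Rem_p M X1 R" and A: "Add_p M X0 A" and "val M R = val M A"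
    and "prec M (gamma M R) A"
  shows "prec M R A"
proof (rule ccontr)
  assume "\<not> prec M R A"
  moreover have "R \<noteq> A"
    using R A Add_not_Rem by (auto simp: Rem_p_def Add_p_def)
  ultimately have A_prec_R: "prec M A R"
    using act_linear[OF Rem1_act[OF R] Add0_act[OF A]] by blast
  have "val M (gamma M R) = val M A"
    using val_gamma[OF Op_p_if_Rem_p[OF R]] assms(3) by simp
  then obtain R' where R': "Rem_p M X1 R'" "gamma M R' = gamma M R" "prec M R' (End M A)"
    using Rem1_of_Add0_before_Op0[OF Op_p_if_Add_p[OF A] gamma_Add0[OF Op_p_if_Rem_p[OF R]]]
      assms(4) by metis
  have "prec M R' R"
    using R'(3) act_End[OF Add0_act[OF A]] A_prec_R prec_trans by metis
  moreover have "prec M (gamma M R) R'"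
    using gamma_prec_Rem1[OF R'(1)] R'(2) by simp
  ultimately show False
    using no_Rem1_between_gamma[OF Op_p_if_Rem_p[OF R] R'(1,2)] by blast
qed

lemma timestamp_bounds:
  "stamps_below M (Begin M X, 0) \<subseteq> timestamp M X \<and> timestamp M X \<subseteq> stamps_below M (End M X, 2)"
proof -
  have Begin_End: "stamps_below M (Begin M X, k) \<subseteq> stamps_below M (End M X, 2)" if "k \<le> 2" for k
    using stamps_below_mono_le[OF Begin_before_End that] .
  consider (succeeded) "Cnt_p M X1 X" | (failed) "Cnt_p M X0 X"
    | (other) "\<not> Cnt_p M X1 X" "\<not> Cnt_p M X0 X"
    by blast
  then show ?thesis
  proof cases
    case succeeded
    then have "stamps_below M (gamma M X, 2) \<subseteq> stamps_below M (End M X, 2)"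
      using gamma_prec_End[OF Op_p_if_Cnt_p] stamps_below_mono_le by blast
    with succeeded show ?thesis
      using Begin_End[of 0] by (auto simp: timestamp_def)
  next
    case failed
    have "stamps_below M (R, 2) \<subseteq> stamps_below M (End M X, 2)"
      if "Rem_p M X1 R" and "\<not> prec M X R" for R
      using End_after_if_not_prec[OF Rem1_act[OF that(1)] that(2)] stamps_below_mono_le by blast
    with failed show ?thesis
      using Begin_End[of 0] by (auto simp: timestamp_def Cnt_p_def)
  next
    case other
    then show ?thesis
      using Begin_End[of 1] stamps_below_mono_le[of "Begin M X" "Begin M X" 0 1]
      by (auto simp: timestamp_def)
  qed
qed

lemma prec_timestamp_less: "prec M X Y \<Longrightarrow> timestamp M X \<subset> timestamp M Y"
proof -
  assume "prec M X Y"
  then have "stamp_less M (End M X, 2) (Begin M Y, 0)"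
    using prec_iff_End_Begin by (simp add: stamp_less_def)
  then show ?thesis
    using stamps_below_psubset timestamp_bounds by blast
qed

lemma timestamp_gamma_less_Cnt1:
  assumes C: "Cnt_p M X1 C"
  shows "timestamp M (gamma M C) \<subset> timestamp M C"
proof -
  have "timestamp M (gamma M C) = stamps_below M (gamma M C, 1)"
    using timestamp_act[OF Add0_act[OF gamma_Add0[OF Op_p_if_Cnt_p[OF C]]]] .
  also have "\<dots> \<subset> stamps_below M (gamma M C, 2)"
    by (rule stamps_below_psubset) (simp add: stamp_less_def)
  also have "\<dots> \<subseteq> timestamp M C"
    using C by (simp add: timestamp_def)
  finally show ?thesis .
qed

lemma timestamp_Cnt1_less_Rem1:
  assumes C: "Cnt_p M X1 C" and R: "Rem_p M X1 R" and "gamma M R = gamma M C"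
  shows "timestamp M C \<subset> timestamp M R"
proof -
  have gamma_R: "prec M (gamma M C) R"
    using gamma_prec_Rem1[OF R] assms(3) by simp
  then have "\<not> prec M R C"
    using no_Rem1_between_gamma[OF Op_p_if_Cnt_p[OF C] R assms(3)] by blast
  then have "stamps_below M (Begin M C, 0) \<subseteq> stamps_below M (R, 0)"
    using Begin_before_if_not_prec[OF Rem1_act[OF R]] stamps_below_mono_le by blast
  moreover have "stamps_below M (gamma M C, 2) \<subseteq> stamps_below M (R, 0)"
    using gamma_R stamps_below_mono by (simp add: stamp_less_def)
  ultimately have "timestamp M C \<subseteq> stamps_below M (R, 0)"
    using C by (simp add: timestamp_def)
  also have "\<dots> \<subset> stamps_below M (R, 1)"
    by (rule stamps_below_psubset) (simp add: stamp_less_def)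
  also have "\<dots> = timestamp M R"
    using timestamp_act[OF Rem1_act[OF R]] by simp
  finally show ?thesis .
qed

lemma timestamp_Rem1_less_Cnt0:
  assumes R: "Rem_p M X1 R" and C: "Cnt_p M X0 C" and "val M R = val M C"
    and "\<not> prec M C R" and "prec M (gamma M R) C"
  shows "timestamp M R \<subset> timestamp M C"
proof -
  have "timestamp M R = stamps_below M (R, 1)"
    using timestamp_act[OF Rem1_act[OF R]] .
  also have "\<dots> \<subset> stamps_below M (R, 2)"
    by (rule stamps_below_psubset) (simp add: stamp_less_def)
  also have "\<dots> \<subseteq> timestamp M C"
    using assms by (auto simp: timestamp_def Cnt_p_def)
  finally show ?thesis .
qed

lemma timestamp_Cnt0_less_Add0:
  assumes C: "Cnt_p M X0 C" and A: "Add_p M X0 A" and "val M C = val M A"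
    and "\<not> prec M A C"
  shows "timestamp M C \<subset> timestamp M A"
proof -
  have Begin_C: "Begin M C = A \<or> prec M (Begin M C) A"
    using Begin_before_if_not_prec[OF Add0_act[OF A] assms(4)] .
  have "stamps_below M (R, 2) \<subseteq> stamps_below M (A, 0)"
    if R: "Rem_p M X1 R" "val M R = val M C" "prec M (gamma M R) C" for R
  proof -
    have "act M (gamma M R)"
      using Add0_act[OF gamma_Add0[OF Op_p_if_Rem_p[OF R(1)]]] .
    then have "prec M (gamma M R) (Begin M C)"
      using R(3) prec_iff_End_Begin act_End by metis
    then have "prec M (gamma M R) A"
      using Begin_C prec_trans by blast
    then have "prec M R A"
      using Rem1_prec_Add0[OF R(1) A] R(2) assms(3) by simp
    then show ?thesis
      using stamps_below_mono by (simp add: stamp_less_def)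
  qed
  moreover have "stamps_below M (Begin M C, 0) \<subseteq> stamps_below M (A, 0)"
    using Begin_C stamps_below_mono_le by blast
  ultimately have "timestamp M C \<subseteq> stamps_below M (A, 0)"
    using C by (auto simp: timestamp_def Cnt_p_def)
  also have "\<dots> \<subset> stamps_below M (A, 1)"
    by (rule stamps_below_psubset) (simp add: stamp_less_def)
  also have "\<dots> = timestamp M A"
    using timestamp_act[OF Add0_act[OF A]] by simp
  finally show ?thesis .
qed

lemma arrow_timestamp_less: "arrow M X Y \<Longrightarrow> timestamp M X \<subset> timestamp M Y"
  unfolding arrow_def
  using timestamp_gamma_less_Cnt1 timestamp_Cnt1_less_Rem1 timestamp_Rem1_less_Cnt0
    timestamp_Cnt0_less_Add0
  by blast

lemma prec'_timestamp_less: "prec' M X Y \<Longrightarrow> timestamp M X \<subset> timestamp M Y"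
  unfolding prec'_def using prec_timestamp_less arrow_timestamp_less by blast

end

theorem theorem3p8:
  fixes M :: "'e sysexec"
  assumes "system_execution M" and "A0 M" and "A1 M" and "A2 M"
  shows "\<not> (\<exists>n::nat. \<exists>X::nat \<Rightarrow> 'e. n \<ge> 1 \<and> X 0 = X n \<and>
              (\<forall>i<n. prec' M (X i) (X (Suc i))))"
proof -
  interpret lazy_set_execution M
    using assms by unfold_locales
  show ?thesis
    using no_cycle_if_strictly_increasing prec'_timestamp_less by blast
qed

end
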